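(* Let $q$ be a prime power and let $C$ be an $[n,k,d]_q$ Griesmer optimal linear code with $q\mid d$ and $\Gamma_q(n,k,d)\ge 2$. Let $\mathbf{c}\in C$ be any codeword of weight $d$ and let $C'$ be any linear subcode of $C$ with $C=\langle \mathbf{c},C'\rangle$ and $\mathbf{c}\notin C'$ (a supplementary subcode of $\mathbf{c}$). Then $$A_{d/q}\big(\Upsilon_{\mathbf{c}}(C)\big)\le \min\Big\{A_d(C'),\ \min\{A_d(C'+\alpha\mathbf{c}) : \alpha\in\mathbb{F}_q^*\}\Big\}.$$
   Context: An $[n,k,d]_q$ linear code is a $k$-dimensional subspace of $\mathbb{F}_q^n$ with minimum nonzero Hamming weight $d$. For any set $S\subseteq\mathbb{F}_q^n$, $A_i(S)$ is the number of vectors of Hamming weight $i$ in $S$; $C'+\mathbf{v}=\{\mathbf{c}'+\mathbf{v}:\mathbf{c}'\in C'\}$. The support of a vector is the set of its nonzero coordinates; $\Upsilon_{\mathbf{c}}(C)$ (the residual code of $C$ with respect to $\mathbf{c}$) is the code obtained from $C$ by deleting all coordinates in the support of $\mathbf{c}$. Let $g_q(k,d)=\sum_{i=0}^{k-1}\lceil d/q^i\rceil$. $C$ is Griesmer optimal if $n<g_q(k,d+1)$. For a Griesmer optimal $[n,k,d]_q$ code, $\Gamma_q(n,k,d)=k$ if $n=g_q(k,d)$; otherwise $\Gamma_q(n,k,d)$ is the smallest non-negative integer $k_1$ such that $n-g_q(k_1,d)\ge g_q(k-k_1,\lceil d/q^{k_1}\rceil+1)$ (with $g_q(0,\cdot)=0$).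 *)

theory Defs
  imports Complex_Main
begin

text \<open>Vectors of F_q^n are lists of length n over a finite field 'a (q = CARD('a)).\<close>

definition hwt :: "'a::zero list \<Rightarrow> nat" where
  "hwt v = length (filter (\<lambda>x. x \<noteq> 0) v)"

definition vadd :: "'a::plus list \<Rightarrow> 'a list \<Rightarrow> 'a list" where
  "vadd u v = map2 (+) u v"

definition vscale :: "'a::times \<Rightarrow> 'a list \<Rightarrow> 'a list" where
  "vscale a v = map (\<lambda>x. a * x) v"

definition zvec :: "nat \<Rightarrow> 'a::zero list" where
  "zvec n = replicate n 0"

definition lincomb :: "nat \<Rightarrow> 'a::comm_ring_1 list \<Rightarrow> 'a list list \<Rightarrow> 'a list" where
  "lincomb n as B = map (\<lambda>i. \<Sum>j<length B. as ! j * (B ! j) ! i) [0..<n]"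

definition is_linear_code :: "nat \<Rightarrow> 'a::field list set \<Rightarrow> bool" where
  "is_linear_code n C \<longleftrightarrow> C \<subseteq> {v. length v = n} \<and> zvec n \<in> C \<and>
     (\<forall>u\<in>C. \<forall>v\<in>C. vadd u v \<in> C) \<and> (\<forall>a. \<forall>v\<in>C. vscale a v \<in> C)"

definition has_dim :: "nat \<Rightarrow> 'a::field list set \<Rightarrow> nat \<Rightarrow> bool" where
  "has_dim n C k \<longleftrightarrow> (\<exists>B. length B = k \<and> set B \<subseteq> C \<and>
     C = {lincomb n as B | as. length as = k} \<and>
     (\<forall>as. length as = k \<longrightarrow> lincomb n as B = zvec n \<longrightarrow> (\<forall>x\<in>set as. x = 0)))"

definition min_wt :: "nat \<Rightarrow> 'a::field list set \<Rightarrow> nat \<Rightarrow> bool" where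
  "min_wt n C d \<longleftrightarrow> (\<exists>c\<in>C. c \<noteq> zvec n \<and> hwt c = d) \<and>
     (\<forall>c\<in>C. c \<noteq> zvec n \<longrightarrow> d \<le> hwt c)"

definition is_nkd_code :: "nat \<Rightarrow> nat \<Rightarrow> nat \<Rightarrow> 'a::field list set \<Rightarrow> bool" where
  "is_nkd_code n k d C \<longleftrightarrow> is_linear_code n C \<and> has_dim n C k \<and> min_wt n C d"

definition A :: "nat \<Rightarrow> 'a::zero list set \<Rightarrow> nat" where
  "A i S = card {v \<in> S. hwt v = i}"

definition griesmer :: "nat \<Rightarrow> nat \<Rightarrow> nat \<Rightarrow> nat" where
  "griesmer q k d = (\<Sum>i<k. nat \<lceil>real d / real q ^ i\<rceil>)"

definition griesmer_optimal :: "nat \<Rightarrow> nat \<Rightarrow> nat \<Rightarrow> nat \<Rightarrow> bool" where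
  "griesmer_optimal q n k d \<longleftrightarrow> n < griesmer q k (d + 1)"

definition Gamma :: "nat \<Rightarrow> nat \<Rightarrow> nat \<Rightarrow> nat \<Rightarrow> nat" where
  "Gamma q n k d = (if n = griesmer q k d then k else
     (LEAST k1. int n - int (griesmer q k1 d)
                  \<ge> int (griesmer q (k - k1) (nat \<lceil>real d / real q ^ k1\<rceil> + 1))))"

definition residual :: "'a::zero list \<Rightarrow> 'a list set \<Rightarrow> 'a list set" where
  "residual c C = (\<lambda>x. nths x {i. i < length c \<and> c ! i = 0}) ` C"

definition coset :: "'a::plus list set \<Rightarrow> 'a list \<Rightarrow> 'a list set" where
  "coset C' v = (\<lambda>x. vadd x v) ` C'"

end

theory Submission
  imports Defs
begin

text \<open>
  Let Z be the zero set of c and r a word of weight d/q in the residual code, the restriction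
  to Z of some x + a c with x in C'. All q words x + b c restrict to r on Z, while on the support
  of c each coordinate of x + b c vanishes for exactly one b. Hence the q words x + b c have total
  weight q (d/q) + (q - 1) d = q d; they are nonzero codewords of C, so each has weight exactly d.
  Thus every such r is the restriction of a weight-d word in each coset C' + b c, and restriction
  to Z bounds A_{d/q} of the residual code by A_d of each coset.
\<close>

lemma hwt_conv_sum: "hwt v = (\<Sum>i<length v. of_bool (v ! i \<noteq> 0))"
  by (simp add: hwt_def length_filter_conv_card Int_def lessThan_def)

lemma hwt_nths: "hwt (nths v I) = (\<Sum>i<length v. of_bool (i \<in> I \<and> v ! i \<noteq> 0))"
proof (induction v arbitrary: I rule: rev_induct)
  case Nil then show ?case by (simp add: hwt_def)
next
  case (snoc x xs)
  then show ?case by (simp add: nths_append hwt_def nth_append)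
qed

lemma hwt_nths_le: "hwt (nths v I) \<le> hwt v"
  unfolding hwt_nths hwt_conv_sum[of v] by (intro sum_mono) auto

lemma nths_cong:
  "length u = length w \<Longrightarrow> (\<And>i. i < length u \<Longrightarrow> i \<in> I \<Longrightarrow> u ! i = w ! i) \<Longrightarrow> nths u I = nths w I"
proof (induction u w arbitrary: I rule: list_induct2)
  case (Cons x xs y ys)
  have "nths xs {j. Suc j \<in> I} = nths ys {j. Suc j \<in> I}"
    using Cons.prems(1)[of "Suc _"] by (intro Cons.IH) auto
  with Cons.prems(1)[of 0] show ?case by (auto simp: nths_Cons)
qed simp

lemma card_nonzero_affine:
  fixes x c :: "'a::{finite,field}"
  shows "card {b. x + b * c \<noteq> 0}
    = (if c = 0 then card (UNIV :: 'a set) * of_bool (x \<noteq> 0) else card (UNIV :: 'a set) - 1)"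
proof (cases "c = 0")
  case False
  then have "{b. x + b * c \<noteq> 0} = UNIV - {- x / c}"
    by (auto simp: field_simps add_eq_0_iff)
  with False show ?thesis by (simp add: card_Diff_singleton)
qed simp

lemma vadd_vscale_zero:
  fixes x c :: "'a::semiring_0 list"
  shows "length x = length c \<Longrightarrow> vadd x (vscale 0 c) = x"
  by (rule nth_equalityI) (simp_all add: vadd_def vscale_def)

lemma nths_zero_set_vadd_vscale:
  fixes x c :: "'a::semiring_0 list"
  assumes "length x = length c"
  shows "nths (vadd x (vscale b c)) {i. i < length c \<and> c ! i = 0}
    = nths x {i. i < length c \<and> c ! i = 0}"
  using assms by (intro nths_cong) (auto simp: vadd_def vscale_def)

lemma sum_hwt_line:
  fixes x c :: "'a::{finite,field} list"
  assumes "length x = length c"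
  shows "(\<Sum>b\<in>UNIV. hwt (vadd x (vscale b c)))
    = card (UNIV :: 'a set) * hwt (nths x {i. i < length c \<and> c ! i = 0})
      + (card (UNIV :: 'a set) - 1) * hwt c"
proof -
  define q where "q = card (UNIV :: 'a set)"
  define Z where "Z = {i. i < length c \<and> c ! i = 0}"
  have "(\<Sum>b\<in>UNIV. hwt (vadd x (vscale b c)))
      = (\<Sum>b\<in>UNIV. \<Sum>i<length c. of_bool (x ! i + b * c ! i \<noteq> 0))"
    using assms by (simp add: hwt_conv_sum vadd_def vscale_def)
  also have "\<dots> = (\<Sum>i<length c. card {b. x ! i + b * c ! i \<noteq> 0})"
    by (subst sum.swap) simp
  also have "\<dots> = (\<Sum>i<length c. q * of_bool (i \<in> Z \<and> x ! i \<noteq> 0) + (q - 1) * of_bool (c ! i \<noteq> 0))"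
    by (intro sum.cong) (auto simp: card_nonzero_affine q_def Z_def)
  also have "\<dots> = q * hwt (nths x Z) + (q - 1) * hwt c"
    using assms by (simp add: sum.distrib sum_distrib_left hwt_nths hwt_conv_sum[of c])
  finally show ?thesis unfolding q_def Z_def .
qed

lemma hwt_line_eq_if_min:
  fixes x c :: "'a::{finite,field} list"
  assumes "length x = length c"
    and "card (UNIV :: 'a set) * hwt (nths x {i. i < length c \<and> c ! i = 0}) = hwt c"
    and "\<And>b. hwt c \<le> hwt (vadd x (vscale b c))"
  shows "hwt (vadd x (vscale b c)) = hwt c"
proof -
  have "card (UNIV :: 'a set) > 0" by (simp add: finite_UNIV_card_ge_0)
  then have "(\<Sum>b\<in>(UNIV :: 'a set). hwt c) = (\<Sum>b\<in>UNIV. hwt (vadd x (vscale b c)))"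
    using assms(2) by (simp add: sum_hwt_line[OF assms(1)] algebra_simps)
  from sum_mono_inv[OF this assms(3)] show ?thesis by simp
qed

lemma residual_word_lifts_to_line:
  fixes C C' :: "'a::{finite,field} list set" and c :: "'a list"
  assumes C: "C = {vadd x (vscale a c) | x a. x \<in> C'}"
    and len: "\<And>x. x \<in> C' \<Longrightarrow> length x = length c"
    and min: "\<And>v. v \<in> C \<Longrightarrow> v \<noteq> zvec (length c) \<Longrightarrow> hwt c \<le> hwt v"
    and r: "r \<in> residual c C" "card (UNIV :: 'a set) * hwt r = hwt c"
  obtains x where "x \<in> C'"
    and "\<And>b. hwt (vadd x (vscale b c)) = hwt c"
    and "\<And>b. nths (vadd x (vscale b c)) {i. i < length c \<and> c ! i = 0} = r"
proof -
  define Z where "Z = {i. i < length c \<and> c ! i = 0}"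
  obtain x a where x: "x \<in> C'" and r_eq: "r = nths (vadd x (vscale a c)) Z"
    using r(1) unfolding C residual_def Z_def by auto
  have proj: "nths (vadd x (vscale b c)) Z = r" for b
    using r_eq nths_zero_set_vadd_vscale[OF len[OF x]] unfolding Z_def by simp
  have line_min: "hwt c \<le> hwt (vadd x (vscale b c))" for b
  proof (cases "vadd x (vscale b c) = zvec (length c)")
    case True
    have "hwt r \<le> hwt (vadd x (vscale b c))"
      using hwt_nths_le[of "vadd x (vscale b c)" Z] by (simp only: proj)
    also have "\<dots> = 0"
      using True by (simp add: zvec_def hwt_def)
    finally show ?thesis using r(2) by simp
  next
    case False
    then show ?thesis using x by (intro min) (auto simp: C)
  qed
  have "card (UNIV :: 'a set) * hwt (nths x Z) = hwt c"
    using proj[of 0] vadd_vscale_zero[OF len[OF x]] r(2) by simp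
  from x hwt_line_eq_if_min[OF len[OF x] this[unfolded Z_def] line_min] proj
  show thesis unfolding Z_def by (rule that)
qed

lemma A_le_A_if_lifts:
  assumes "finite T" and "\<And>r. r \<in> S \<Longrightarrow> hwt r = i \<Longrightarrow> \<exists>v\<in>T. hwt v = j \<and> f v = r"
  shows "A i S \<le> A j T"
proof -
  have "{r \<in> S. hwt r = i} \<subseteq> f ` {v \<in> T. hwt v = j}"
    using assms(2) by force
  then have "A i S \<le> card (f ` {v \<in> T. hwt v = j})"
    unfolding A_def using assms(1) by (intro card_mono) auto
  also have "\<dots> \<le> A j T"
    unfolding A_def by (rule card_image_le) (use assms(1) in simp)
  finally show ?thesis .
qed

lemma coset_vscale_zero:
  fixes c :: "'a::semiring_0 list"
  assumes "\<And>x. x \<in> C' \<Longrightarrow> length x = length c"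
  shows "coset C' (vscale 0 c) = C'"
  using assms by (simp add: coset_def vadd_vscale_zero)

lemma A_residual_le_A_coset:
  fixes C C' :: "'a::{finite,field} list set" and c :: "'a list"
  assumes C: "C = {vadd x (vscale a c) | x a. x \<in> C'}"
    and len: "\<And>x. x \<in> C' \<Longrightarrow> length x = length c"
    and min: "\<And>v. v \<in> C \<Longrightarrow> v \<noteq> zvec (length c) \<Longrightarrow> hwt c \<le> hwt v"
    and m: "card (UNIV :: 'a set) * m = hwt c"
  shows "A m (residual c C) \<le> A (hwt c) (coset C' (vscale b c))"
proof (rule A_le_A_if_lifts[where f = "\<lambda>v. nths v {i. i < length c \<and> c ! i = 0}"])
  have "finite C'"
    by (rule finite_subset[OF _ finite_lists_length_eq[OF finite_UNIV, of "length c"]])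
      (use len in auto)
  then show "finite (coset C' (vscale b c))" by (simp add: coset_def)
next
  fix r assume "r \<in> residual c C" "hwt r = m"
  then obtain x where "x \<in> C'" "hwt (vadd x (vscale b c)) = hwt c"
      "nths (vadd x (vscale b c)) {i. i < length c \<and> c ! i = 0} = r"
    using residual_word_lifts_to_line[OF C len min] m by metis
  then show "\<exists>v\<in>coset C' (vscale b c). hwt v = hwt c \<and> nths v {i. i < length c \<and> c ! i = 0} = r"
    unfolding coset_def by blast
qed

theorem proposition1:
  fixes C C' :: "'a::{finite,field} list set" and c :: "'a list" and n k d :: nat
  assumes "is_nkd_code n k d C"
    and "griesmer_optimal (card (UNIV :: 'a set)) n k d"
    and "(card (UNIV :: 'a set)) dvd d"
    and "Gamma (card (UNIV :: 'a set)) n k d \<ge> 2"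
    and "c \<in> C" and "hwt c = d"
    and "is_linear_code n C'" and "C' \<subseteq> C"
    and "C = {vadd x (vscale a c) | x a. x \<in> C'}"
    and "c \<notin> C'"
  shows "A (d div (card (UNIV :: 'a set))) (residual c C)
           \<le> min (A d C') (Min {A d (coset C' (vscale \<alpha> c)) | \<alpha>. \<alpha> \<noteq> 0})"
proof -
  have len_c: "length c = n"
    using assms(1,5) by (auto simp: is_nkd_code_def is_linear_code_def)
  have len_C': "length x = length c" if "x \<in> C'" for x
    using assms(7) that len_c by (auto simp: is_linear_code_def)
  have min: "hwt c \<le> hwt v" if "v \<in> C" "v \<noteq> zvec (length c)" for v
    using assms(1,6) that len_c by (auto simp: is_nkd_code_def min_wt_def)
  have "card (UNIV :: 'a set) * (d div card (UNIV :: 'a set)) = hwt c"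
    using assms(3,6) by simp
  note bound = A_residual_le_A_coset[OF assms(9) len_C' min this, unfolded assms(6)]
  have "A (d div card (UNIV :: 'a set)) (residual c C) \<le> A d C'"
    using bound[of 0] by (simp add: coset_vscale_zero len_C')
  moreover have "finite {A d (coset C' (vscale \<alpha> c)) | \<alpha>. \<alpha> \<noteq> 0}"
    using finite_image_set[of "\<lambda>\<alpha>. \<alpha> \<noteq> 0"] by auto
  moreover have "{A d (coset C' (vscale \<alpha> c)) | \<alpha>. \<alpha> \<noteq> 0} \<noteq> {}"
    using one_neq_zero by blast
  ultimately show ?thesis
    using bound by (auto simp: Min_ge_iff)
qed

end
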